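(* Let $R$ be a right Noetherian ring, $\alpha$ an automorphism of $R$, $S=R[\theta;\alpha]$, and let $u$ be a central unit of $R$. (a) The lattice of $\alpha$-stable right ideals of $R$ is isomorphic to the lattice of right $S$-submodules of $S/(u-\theta)S$ (via $N\mapsto ((u-\theta)S+N)/(u-\theta)S$). (b) If moreover $R$ is commutative, then the right $S$-module $S/(u-\theta)S$ is simple if and only if $R$ is $\alpha$-simple. (c) If moreover $R$ is a commutative domain with no nonzero proper idempotent ideals (e.g. $R$ a commutative Noetherian domain), then $S/(u-\theta)S$ is an Artinian right $S$-module if and only if $R$ is $\alpha$-simple.
   Context: $R[\theta;\alpha]$ denotes the skew polynomial ring of polynomials $\sum r_i\theta^i$ ($r_i\in R$) with multiplication determined by $\theta r=\alpha(r)\theta$ for $r\in R$. A (right) ideal $I$ of $R$ is $\alpha$-stable if $\alpha(I)=I$. $R$ is $\alpha$-simple if $(0)$ and $R$ are its only $\alpha$-stable ideals. *)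

theory Defs
  imports Main
begin

definition right_ideal :: "'a::ring_1 set \<Rightarrow> bool" where
  "right_ideal I \<longleftrightarrow> 0 \<in> I \<and> (\<forall>x\<in>I. \<forall>y\<in>I. x + y \<in> I) \<and> (\<forall>x\<in>I. - x \<in> I)
     \<and> (\<forall>x\<in>I. \<forall>r. x * r \<in> I)"

definition two_sided_ideal :: "'a::ring_1 set \<Rightarrow> bool" where
  "two_sided_ideal I \<longleftrightarrow> right_ideal I \<and> (\<forall>x\<in>I. \<forall>r. r * x \<in> I)"

definition right_noetherian :: "'a::ring_1 itself \<Rightarrow> bool" where
  "right_noetherian (T::'a itself) \<longleftrightarrow>
     (\<forall>f :: nat \<Rightarrow> 'a set. (\<forall>n. right_ideal (f n)) \<and> (\<forall>n. f n \<subseteq> f (Suc n))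
        \<longrightarrow> (\<exists>m. \<forall>n\<ge>m. f n = f m))"

definition ring_automorphism :: "('a::ring_1 \<Rightarrow> 'a) \<Rightarrow> bool" where
  "ring_automorphism \<alpha> \<longleftrightarrow> bij \<alpha> \<and> (\<forall>x y. \<alpha> (x + y) = \<alpha> x + \<alpha> y)
     \<and> (\<forall>x y. \<alpha> (x * y) = \<alpha> x * \<alpha> y) \<and> \<alpha> 1 = 1"

definition central_unit :: "'a::ring_1 \<Rightarrow> bool" where
  "central_unit u \<longleftrightarrow> (\<forall>x. u * x = x * u) \<and> (\<exists>v. u * v = 1 \<and> v * u = 1)"

definition alpha_simple :: "('a::ring_1 \<Rightarrow> 'a) \<Rightarrow> bool" where
  "alpha_simple \<alpha> \<longleftrightarrow> (\<forall>I. two_sided_ideal I \<and> \<alpha> ` I = I \<longrightarrow> I = {0} \<or> I = UNIV)"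

definition ideal_prod :: "'a::ring_1 set \<Rightarrow> 'a set \<Rightarrow> 'a set" where
  "ideal_prod I J = {(\<Sum>k<n. a k * b k) | (n::nat) a b. \<forall>k<n. a k \<in> I \<and> b k \<in> J}"

definition no_nontrivial_idempotent_ideals :: "'a::ring_1 itself \<Rightarrow> bool" where
  "no_nontrivial_idempotent_ideals (T::'a itself) \<longleftrightarrow>
     (\<forall>I :: 'a set. two_sided_ideal I \<and> ideal_prod I I = I \<longrightarrow> I = {0} \<or> I = UNIV)"

text \<open>A skew polynomial \<open>\<Sum> r_i \<theta>^i\<close> is its coefficient function with finite support.\<close>
definition skpoly :: "(nat \<Rightarrow> 'a::zero) set" where
  "skpoly = {p. finite {i. p i \<noteq> 0}}"

definition sk_add :: "(nat \<Rightarrow> 'a::ring_1) \<Rightarrow> (nat \<Rightarrow> 'a) \<Rightarrow> (nat \<Rightarrow> 'a)" where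
  "sk_add p q = (\<lambda>k. p k + q k)"

text \<open>Multiplication determined by \<open>\<theta> r = \<alpha>(r) \<theta>\<close>:
  \<open>(r \<theta>^i)(s \<theta>^j) = r \<alpha>^i(s) \<theta>^(i+j)\<close>.\<close>
definition sk_mult :: "('a::ring_1 \<Rightarrow> 'a) \<Rightarrow> (nat \<Rightarrow> 'a) \<Rightarrow> (nat \<Rightarrow> 'a) \<Rightarrow> (nat \<Rightarrow> 'a)" where
  "sk_mult \<alpha> p q = (\<lambda>k. \<Sum>i\<le>k. p i * (\<alpha> ^^ i) (q (k - i)))"

definition sk_C :: "'a::ring_1 \<Rightarrow> (nat \<Rightarrow> 'a)" where
  "sk_C r = (\<lambda>k. if k = 0 then r else 0)"

definition sk_theta :: "nat \<Rightarrow> 'a::ring_1" where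
  "sk_theta = (\<lambda>k. if k = 1 then 1 else 0)"

definition sk_zero :: "nat \<Rightarrow> 'a::ring_1" where
  "sk_zero = (\<lambda>k. 0)"

definition sk_gen :: "'a::ring_1 \<Rightarrow> (nat \<Rightarrow> 'a)" where
  "sk_gen u = sk_add (sk_C u) (\<lambda>k. - sk_theta k)"

definition genS :: "('a::ring_1 \<Rightarrow> 'a) \<Rightarrow> 'a \<Rightarrow> (nat \<Rightarrow> 'a) set" where
  "genS \<alpha> u = (\<lambda>s. sk_mult \<alpha> (sk_gen u) s) ` skpoly"

definition sk_coset :: "(nat \<Rightarrow> 'a::ring_1) set \<Rightarrow> (nat \<Rightarrow> 'a) \<Rightarrow> (nat \<Rightarrow> 'a) set" where
  "sk_coset I p = (\<lambda>x. sk_add p x) ` I"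

definition quot_carrier :: "(nat \<Rightarrow> 'a::ring_1) set \<Rightarrow> (nat \<Rightarrow> 'a) set set" where
  "quot_carrier I = sk_coset I ` skpoly"

definition quot_submodule ::
  "('a::ring_1 \<Rightarrow> 'a) \<Rightarrow> (nat \<Rightarrow> 'a) set \<Rightarrow> (nat \<Rightarrow> 'a) set set \<Rightarrow> bool" where
  "quot_submodule \<alpha> I M \<longleftrightarrow> M \<subseteq> quot_carrier I \<and> sk_coset I sk_zero \<in> M
     \<and> (\<forall>p\<in>skpoly. \<forall>q\<in>skpoly. sk_coset I p \<in> M \<longrightarrow> sk_coset I q \<in> M
            \<longrightarrow> sk_coset I (sk_add p q) \<in> M)
     \<and> (\<forall>p\<in>skpoly. sk_coset I p \<in> M \<longrightarrow> sk_coset I (\<lambda>k. - p k) \<in> M)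
     \<and> (\<forall>p\<in>skpoly. \<forall>s\<in>skpoly. sk_coset I p \<in> M \<longrightarrow> sk_coset I (sk_mult \<alpha> p s) \<in> M)"

definition quot_simple :: "('a::ring_1 \<Rightarrow> 'a) \<Rightarrow> (nat \<Rightarrow> 'a) set \<Rightarrow> bool" where
  "quot_simple \<alpha> I \<longleftrightarrow> quot_carrier I \<noteq> {sk_coset I sk_zero}
     \<and> (\<forall>M. quot_submodule \<alpha> I M \<longrightarrow> M = {sk_coset I sk_zero} \<or> M = quot_carrier I)"

definition quot_artinian :: "('a::ring_1 \<Rightarrow> 'a) \<Rightarrow> (nat \<Rightarrow> 'a) set \<Rightarrow> bool" where
  "quot_artinian \<alpha> I \<longleftrightarrow>
     (\<forall>f :: nat \<Rightarrow> (nat \<Rightarrow> 'a) set set. (\<forall>n. quot_submodule \<alpha> I (f n)) \<and> (\<forall>n. f (Suc n) \<subseteq> f n)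
        \<longrightarrow> (\<exists>m. \<forall>n\<ge>m. f n = f m))"

definition Phi :: "('a::ring_1 \<Rightarrow> 'a) \<Rightarrow> 'a \<Rightarrow> 'a set \<Rightarrow> (nat \<Rightarrow> 'a) set set" where
  "Phi \<alpha> u N = sk_coset (genS \<alpha> u) ` {sk_add x (sk_C n) | x n. x \<in> genS \<alpha> u \<and> n \<in> N}"

end

theory Submission
  imports Defs
begin

text \<open>Put \<open>\<beta>(x) = u \<alpha>\<inverse>(x)\<close> and reduce a skew polynomial modulo \<open>(u - \<theta>)S\<close> by
  \<open>\<epsilon>(\<Sum> r\<^sub>k \<theta>\<^sup>k) = \<Sum> \<beta>\<^sup>k(r\<^sub>k)\<close>.  This additive map \<open>S \<rightarrow> R\<close> has kernel exactly \<open>(u - \<theta>)S\<close>,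
  since \<open>r \<theta>\<^sup>k \<equiv> \<beta>(r) \<theta>\<^sup>k\<^sup>-\<^sup>1\<close>, and it turns the right action of \<open>S\<close> on \<open>S/(u - \<theta>)S\<close> into an
  action on \<open>R\<close> by right multiplications and powers of \<open>\<beta>\<close>.  Hence submodules correspond to
  right ideals closed under \<open>\<beta>\<close>, equivalently (u being a central unit) under \<open>\<alpha>\<inverse>\<close>; for such
  an ideal \<open>N\<close> the chain \<open>N \<subseteq> \<alpha>(N) \<subseteq> \<alpha>\<^sup>2(N) \<subseteq> \<dots>\<close> stabilises because \<open>R\<close> is right
  Noetherian, which forces \<open>\<alpha>(N) = N\<close>.  For (c), a nonzero proper
  \<open>\<alpha>\<close>-stable ideal \<open>I\<close> of a domain yields the chain \<open>I \<supseteq> I\<^sup>2 \<supseteq> I\<^sup>4 \<supseteq> \<dots>\<close> of nonzero stable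
  ideals; if it stabilises, some \<open>I\<^sup>2\<^sup>n\<close> is idempotent, which is excluded.\<close>

section \<open>Skew polynomials\<close>

definition sk_monom :: "'a::ring_1 \<Rightarrow> nat \<Rightarrow> nat \<Rightarrow> 'a" where
  "sk_monom c n = (\<lambda>k. if k = n then c else 0)"

lemma skpoly_iff_eventually_zero: "p \<in> skpoly \<longleftrightarrow> (\<exists>M. \<forall>k>M. p k = 0)"
proof
  assume "p \<in> skpoly"
  then obtain M where "\<forall>n\<in>{i. p i \<noteq> 0}. n \<le> M"
    unfolding skpoly_def finite_nat_set_iff_bounded_le by blast
  then show "\<exists>M. \<forall>k>M. p k = 0" by (meson leD mem_Collect_eq)
next
  assume "\<exists>M. \<forall>k>M. p k = 0"
  then obtain M where "\<forall>k>M. p k = 0" by blast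
  then have "{i. p i \<noteq> 0} \<subseteq> {..M}" by (auto simp: not_less[symmetric])
  then show "p \<in> skpoly" unfolding skpoly_def using finite_subset by blast
qed

lemma finite_support_skpoly: "p \<in> skpoly \<Longrightarrow> finite {k. p k \<noteq> 0}"
  by (simp add: skpoly_def)

lemma skpoly_zero: "(\<lambda>k. 0) \<in> skpoly"
  unfolding skpoly_def by simp

lemma skpoly_add: "p \<in> skpoly \<Longrightarrow> q \<in> skpoly \<Longrightarrow> sk_add p q \<in> skpoly"
  unfolding skpoly_def sk_add_def
  by (auto intro: finite_subset[of _ "{i. p i \<noteq> 0} \<union> {i. q i \<noteq> 0}"])

lemma skpoly_uminus: "(p :: nat \<Rightarrow> 'a::ring_1) \<in> skpoly \<Longrightarrow> (\<lambda>k. - p k) \<in> skpoly"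
  unfolding skpoly_def by simp

lemma skpoly_diff: "(p :: nat \<Rightarrow> 'a::ring_1) \<in> skpoly \<Longrightarrow> q \<in> skpoly \<Longrightarrow> (\<lambda>k. p k - q k) \<in> skpoly"
  using skpoly_add[of p "\<lambda>k. - q k"] skpoly_uminus[of q] by (simp add: sk_add_def)

lemma skpoly_monom: "sk_monom c n \<in> skpoly"
  unfolding skpoly_def sk_monom_def by (auto intro: finite_subset[of _ "{n}"])

lemma sk_C_eq_monom: "sk_C r = sk_monom r 0"
  unfolding sk_C_def sk_monom_def by auto

lemma sk_theta_eq_monom: "sk_theta = sk_monom 1 1"
  unfolding sk_theta_def sk_monom_def by auto

lemma skpoly_C: "sk_C r \<in> skpoly"
  by (simp add: sk_C_eq_monom skpoly_monom)

lemma skpoly_theta: "sk_theta \<in> skpoly"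
  by (simp add: sk_theta_eq_monom skpoly_monom)

lemma sk_gen_eq_monom: "sk_gen u = sk_add (sk_monom u 0) (sk_monom (-1) 1)"
  unfolding sk_gen_def sk_add_def sk_C_def sk_theta_def sk_monom_def by (rule ext) auto

lemma skpoly_gen: "sk_gen u \<in> skpoly"
  by (simp add: sk_gen_eq_monom skpoly_add skpoly_monom)

lemma skpoly_induct [consumes 1, case_names zero add_monom]:
  assumes "p \<in> skpoly" and "P (\<lambda>k. 0)"
    and "\<And>q c n. q \<in> skpoly \<Longrightarrow> P q \<Longrightarrow> P (sk_add q (sk_monom c n))"
  shows "P p"
proof -
  have "\<forall>p. {i. p i \<noteq> 0} \<subseteq> A \<longrightarrow> P p" if "finite A" for A
    using that
  proof (induction A rule: finite_induct)
    case empty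
    have "p = (\<lambda>k. 0)" if "{i. p i \<noteq> 0} \<subseteq> {}" for p :: "nat \<Rightarrow> 'a"
      using that by auto
    then show ?case using assms(2) by blast
  next
    case (insert a A)
    show ?case
    proof (intro allI impI)
      fix p :: "nat \<Rightarrow> 'a" assume supp: "{i. p i \<noteq> 0} \<subseteq> insert a A"
      define q where "q = p(a := 0)"
      have "{i. q i \<noteq> 0} \<subseteq> A" using supp by (auto simp: q_def)
      then have "q \<in> skpoly" and "P q"
        using insert.hyps(1) insert.IH by (auto simp: skpoly_def intro: finite_subset)
      then have "P (sk_add q (sk_monom (p a) a))" by (rule assms(3))
      moreover have "sk_add q (sk_monom (p a) a) = p"
        by (rule ext) (simp add: q_def sk_add_def sk_monom_def)
      ultimately show "P p" by simp
    qed
  qed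
  then show ?thesis using assms(1) unfolding skpoly_def by blast
qed

lemma sk_mult_add_left:
  "sk_mult \<alpha> (sk_add p q) s = sk_add (sk_mult \<alpha> p s) (sk_mult \<alpha> q s)"
  unfolding sk_mult_def sk_add_def by (rule ext) (simp add: distrib_right sum.distrib)

lemma sk_mult_zero_left: "sk_mult \<alpha> (\<lambda>k. 0) s = (\<lambda>k. 0)"
  unfolding sk_mult_def by simp

lemma sk_mult_monom_left:
  "sk_mult \<alpha> (sk_monom a i) s = (\<lambda>k. if i \<le> k then a * (\<alpha> ^^ i) (s (k - i)) else 0)"
proof (rule ext)
  fix k
  have "sk_mult \<alpha> (sk_monom a i) s k = (\<Sum>l\<le>k. if l = i then a * (\<alpha> ^^ l) (s (k - l)) else 0)"
    unfolding sk_mult_def sk_monom_def by (rule sum.cong) auto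
  then show "sk_mult \<alpha> (sk_monom a i) s k = (if i \<le> k then a * (\<alpha> ^^ i) (s (k - i)) else 0)"
    by (simp add: sum.delta)
qed

lemma sk_mult_C_left: "sk_mult \<alpha> (sk_C x) s = (\<lambda>k. x * s k)"
  by (simp add: sk_C_eq_monom sk_mult_monom_left)

lemma sk_add_C: "sk_add (sk_C x) (sk_C y) = sk_C (x + y)"
  unfolding sk_add_def sk_C_def by auto

lemma uminus_sk_C: "(\<lambda>k. - sk_C x k) = sk_C (- x)"
  unfolding sk_C_def by auto

lemma sk_mult_C: "sk_mult \<alpha> (sk_C x) (sk_C y) = sk_C (x * y)"
  by (simp add: sk_mult_C_left) (auto simp: sk_C_def)

lemma sk_C_0: "sk_C 0 = sk_zero"
  unfolding sk_C_def sk_zero_def by auto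

lemma right_ideal_zero: "right_ideal N \<Longrightarrow> 0 \<in> N"
  unfolding right_ideal_def by blast

lemma right_ideal_add: "right_ideal N \<Longrightarrow> x \<in> N \<Longrightarrow> y \<in> N \<Longrightarrow> x + y \<in> N"
  unfolding right_ideal_def by blast

lemma right_ideal_uminus: "right_ideal N \<Longrightarrow> x \<in> N \<Longrightarrow> - x \<in> N"
  unfolding right_ideal_def by blast

lemma right_ideal_mult: "right_ideal N \<Longrightarrow> x \<in> N \<Longrightarrow> x * r \<in> N"
  unfolding right_ideal_def by blast

lemma right_ideal_sum: "right_ideal N \<Longrightarrow> (\<And>j. j \<in> A \<Longrightarrow> f j \<in> N) \<Longrightarrow> sum f A \<in> N"
  by (induct A rule: infinite_finite_induct) (auto simp: right_ideal_zero right_ideal_add)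

lemma two_sided_ideal_iff_right_ideal:
  assumes "\<forall>x y::'a::ring_1. x * y = y * x"
  shows "two_sided_ideal (N :: 'a set) \<longleftrightarrow> right_ideal N"
  using assms right_ideal_mult unfolding two_sided_ideal_def by metis

lemma mem_ideal_prod_iff:
  "z \<in> ideal_prod I J \<longleftrightarrow> (\<exists>(n::nat) a b. z = (\<Sum>k<n. a k * b k) \<and> (\<forall>k<n. a k \<in> I \<and> b k \<in> J))"
  unfolding ideal_prod_def by auto

lemma sum_mem_ideal_prod:
  "(\<forall>k<n. a k \<in> I \<and> b k \<in> J) \<Longrightarrow> (\<Sum>k<(n::nat). a k * b k) \<in> ideal_prod I J"
  unfolding mem_ideal_prod_iff by blast

lemma mult_mem_ideal_prod: "x \<in> I \<Longrightarrow> y \<in> J \<Longrightarrow> x * y \<in> ideal_prod I J"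
  using sum_mem_ideal_prod[of 1 "\<lambda>_. x" I "\<lambda>_. y" J] by simp

lemma ideal_prod_subset: "right_ideal I \<Longrightarrow> ideal_prod I J \<subseteq> I"
  unfolding ideal_prod_def by (auto intro!: right_ideal_sum right_ideal_mult)

lemma sum_lessThan_append:
  fixes n m :: nat
  shows "(\<Sum>k<n. f k) + (\<Sum>k<m. g k) = (\<Sum>k<n+m. if k < n then f k else g (k - n))"
  by (induct m) (simp_all add: add.assoc[symmetric])

lemma right_ideal_ideal_prod:
  assumes J: "right_ideal J"
  shows "right_ideal (ideal_prod I J)"
  unfolding right_ideal_def[of "ideal_prod I J"]
proof (intro conjI ballI allI)
  show "0 \<in> ideal_prod I J"
    using sum_mem_ideal_prod[of 0] by simp
next
  fix x y assume "x \<in> ideal_prod I J" "y \<in> ideal_prod I J"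
  then obtain n m :: nat and a b a' b' where
    x: "x = (\<Sum>k<n. a k * b k)" "\<forall>k<n. a k \<in> I \<and> b k \<in> J" and
    y: "y = (\<Sum>k<m. a' k * b' k)" "\<forall>k<m. a' k \<in> I \<and> b' k \<in> J"
    unfolding mem_ideal_prod_iff by blast
  define A where "A k = (if k < n then a k else a' (k - n))" for k
  define B where "B k = (if k < n then b k else b' (k - n))" for k
  have "x + y = (\<Sum>k<n+m. A k * B k)"
    unfolding x y sum_lessThan_append A_def B_def by (rule sum.cong) auto
  moreover have "\<forall>k<n+m. A k \<in> I \<and> B k \<in> J" using x y by (auto simp: A_def B_def)
  ultimately show "x + y \<in> ideal_prod I J" unfolding mem_ideal_prod_iff by blast
next
  fix x assume "x \<in> ideal_prod I J"
  then obtain n :: nat and a b where x: "x = (\<Sum>k<n. a k * b k)" "\<forall>k<n. a k \<in> I \<and> b k \<in> J"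
    unfolding mem_ideal_prod_iff by blast
  have "- x = (\<Sum>k<n. a k * (- b k))" by (simp add: x sum_negf)
  moreover have "(\<Sum>k<n. a k * (- b k)) \<in> ideal_prod I J"
    by (rule sum_mem_ideal_prod) (use x J in \<open>auto intro: right_ideal_uminus\<close>)
  ultimately show "- x \<in> ideal_prod I J" by simp
next
  fix x r assume "x \<in> ideal_prod I J"
  then obtain n :: nat and a b where x: "x = (\<Sum>k<n. a k * b k)" "\<forall>k<n. a k \<in> I \<and> b k \<in> J"
    unfolding mem_ideal_prod_iff by blast
  have "x * r = (\<Sum>k<n. a k * (b k * r))" by (simp add: x sum_distrib_right mult.assoc)
  moreover have "(\<Sum>k<n. a k * (b k * r)) \<in> ideal_prod I J"
    by (rule sum_mem_ideal_prod) (use x J in \<open>auto intro: right_ideal_mult\<close>)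
  ultimately show "x * r \<in> ideal_prod I J" by simp
qed

locale ring_aut =
  fixes \<alpha> :: "'a::ring_1 \<Rightarrow> 'a"
  assumes aut: "ring_automorphism \<alpha>"
begin

lemma aut_add: "\<alpha> (x + y) = \<alpha> x + \<alpha> y"
  using aut unfolding ring_automorphism_def by blast

lemma aut_mult: "\<alpha> (x * y) = \<alpha> x * \<alpha> y"
  using aut unfolding ring_automorphism_def by blast

lemma aut_one: "\<alpha> 1 = 1"
  using aut unfolding ring_automorphism_def by blast

lemma inj_aut: "inj \<alpha>"
  using aut bij_is_inj unfolding ring_automorphism_def by blast

lemma surj_aut: "surj \<alpha>"
  using aut bij_is_surj unfolding ring_automorphism_def by blast

lemma aut_zero: "\<alpha> 0 = 0"
  using aut_add[of 0 0] by simp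

lemma aut_uminus: "\<alpha> (- x) = - \<alpha> x"
  using aut_add[of x "- x"] aut_zero minus_unique[of "\<alpha> x" "\<alpha> (- x)"] by simp

lemma aut_sum: "\<alpha> (sum f A) = (\<Sum>i\<in>A. \<alpha> (f i))"
  using sum_comp_morphism[of \<alpha> f A] by (simp add: aut_zero aut_add comp_def)

lemma inv_aut_aut: "inv \<alpha> (\<alpha> x) = x"
  using inj_aut by (simp add: inv_f_f)

lemma aut_inv_aut: "\<alpha> (inv \<alpha> x) = x"
  using surj_aut by (simp add: surj_f_inv_f)

lemma inv_aut_mult: "inv \<alpha> (x * y) = inv \<alpha> x * inv \<alpha> y"
  by (metis aut_inv_aut aut_mult inv_aut_aut)

lemma inv_aut_one: "inv \<alpha> 1 = 1"
  by (metis aut_one inv_aut_aut)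

lemma inv_aut_uminus: "inv \<alpha> (- x) = - inv \<alpha> x"
  by (metis aut_inv_aut aut_uminus inv_aut_aut)

lemma aut_pow_add: "(\<alpha> ^^ n) (x + y) = (\<alpha> ^^ n) x + (\<alpha> ^^ n) y"
  by (induct n) (auto simp: aut_add)

lemma aut_pow_zero: "(\<alpha> ^^ n) 0 = 0"
  by (induct n) (auto simp: aut_zero)

lemma right_ideal_aut_image: "right_ideal N \<Longrightarrow> right_ideal (\<alpha> ` N)"
  unfolding right_ideal_def
  by (auto simp: aut_add[symmetric] aut_uminus[symmetric] image_iff)
    (metis aut_zero, metis aut_inv_aut aut_mult)

lemma aut_image_eq_if_subset:
  assumes noeth: "right_noetherian TYPE('a)"
    and N: "right_ideal N" and sub: "N \<subseteq> \<alpha> ` N"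
  shows "\<alpha> ` N = N"
proof -
  define f where "f n = (\<alpha> ^^ n) ` N" for n
  have f_Suc: "f (Suc n) = (\<alpha> ^^ n) ` (\<alpha> ` N)" for n
    unfolding f_def by (simp only: funpow_Suc_right image_comp)
  have "right_ideal (f n)" for n
  proof (induct n)
    case 0 then show ?case using N by (simp add: f_def)
  next
    case (Suc n)
    have "f (Suc n) = \<alpha> ` f n" by (simp add: f_def image_comp)
    then show ?case using right_ideal_aut_image[OF Suc] by simp
  qed
  moreover have "f n \<subseteq> f (Suc n)" for n
    using image_mono[OF sub, of "\<alpha> ^^ n"] unfolding f_Suc by (simp only: f_def)
  ultimately obtain m where m: "\<forall>n\<ge>m. f n = f m"
    using noeth unfolding right_noetherian_def by blast
  then have "f (Suc m) = f m" by (rule allE[of _ "Suc m"]) simp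
  then have "(\<alpha> ^^ m) ` (\<alpha> ` N) = (\<alpha> ^^ m) ` N"
    unfolding f_Suc by (simp only: f_def)
  moreover have "inj (\<alpha> ^^ m)" using inj_aut by simp
  ultimately show ?thesis by (simp add: inj_image_eq_iff)
qed

lemma aut_image_ideal_prod:
  assumes J: "\<alpha> ` J = J"
  shows "\<alpha> ` ideal_prod J J = ideal_prod J J"
proof
  show "\<alpha> ` ideal_prod J J \<subseteq> ideal_prod J J"
  proof
    fix z assume "z \<in> \<alpha> ` ideal_prod J J"
    then obtain w where w: "w \<in> ideal_prod J J" and z: "z = \<alpha> w" by blast
    from w obtain n :: nat and a b where w_eq: "w = (\<Sum>k<n. a k * b k)"
      and ab: "\<forall>k<n. a k \<in> J \<and> b k \<in> J"
      unfolding mem_ideal_prod_iff by blast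
    have "z = (\<Sum>k<n. \<alpha> (a k) * \<alpha> (b k))" by (simp add: z w_eq aut_sum aut_mult)
    moreover have "(\<Sum>k<n. \<alpha> (a k) * \<alpha> (b k)) \<in> ideal_prod J J"
      by (rule sum_mem_ideal_prod) (use ab J in blast)
    ultimately show "z \<in> ideal_prod J J" by simp
  qed
  show "ideal_prod J J \<subseteq> \<alpha> ` ideal_prod J J"
  proof
    fix z assume "z \<in> ideal_prod J J"
    then obtain n :: nat and a b where z: "z = (\<Sum>k<n. a k * b k)" "\<forall>k<n. a k \<in> J \<and> b k \<in> J"
      unfolding mem_ideal_prod_iff by blast
    have inv_mem: "inv \<alpha> w \<in> J" if "w \<in> J" for w
      using that J by (metis inv_aut_aut imageE)
    have "z = \<alpha> (\<Sum>k<n. inv \<alpha> (a k) * inv \<alpha> (b k))" by (simp add: z aut_sum aut_mult aut_inv_aut)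
    moreover have "(\<Sum>k<n. inv \<alpha> (a k) * inv \<alpha> (b k)) \<in> ideal_prod J J"
      by (rule sum_mem_ideal_prod) (use z inv_mem in blast)
    ultimately show "z \<in> \<alpha> ` ideal_prod J J" by blast
  qed
qed

lemma alpha_simple_if_stable_ideals_dcc:
  assumes comm: "\<forall>x y::'a. x * y = y * x"
    and domain: "\<forall>x y::'a. x * y = 0 \<longrightarrow> x = 0 \<or> y = 0"
    and no_idem: "no_nontrivial_idempotent_ideals TYPE('a)"
    and dcc: "\<And>f. (\<And>n. right_ideal (f n) \<and> \<alpha> ` f n = f n) \<Longrightarrow> (\<And>n. f (Suc n) \<subseteq> f n)
                \<Longrightarrow> \<exists>m. f (Suc m) = f m"
  shows "alpha_simple \<alpha>"
  unfolding alpha_simple_def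
proof (intro allI impI)
  fix I assume "two_sided_ideal I \<and> \<alpha> ` I = I"
  then have I: "right_ideal I" "\<alpha> ` I = I"
    using two_sided_ideal_iff_right_ideal[OF comm] by auto
  show "I = {0} \<or> I = UNIV"
  proof (rule ccontr)
    assume nontriv: "\<not> (I = {0} \<or> I = UNIV)"
    then obtain x0 where x0: "x0 \<in> I" "x0 \<noteq> 0" using right_ideal_zero[OF I(1)] by blast
    define J where "J n = ((\<lambda>J. ideal_prod J J) ^^ n) I" for n
    have J_Suc: "J (Suc n) = ideal_prod (J n) (J n)" for n by (simp add: J_def)
    have J: "right_ideal (J n) \<and> \<alpha> ` J n = J n \<and> (\<exists>x\<in>J n. x \<noteq> 0)" for n
    proof (induct n)
      case 0 then show ?case using I x0 by (auto simp: J_def)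
    next
      case (Suc n)
      then obtain x where "x \<in> J n" "x \<noteq> 0" by blast
      then have "x * x \<in> J (Suc n)" "x * x \<noteq> 0"
        using mult_mem_ideal_prod domain by (auto simp: J_Suc)
      then show ?case
        using Suc right_ideal_ideal_prod aut_image_ideal_prod unfolding J_Suc by blast
    qed
    moreover have "J (Suc n) \<subseteq> J n" for n
      using ideal_prod_subset J unfolding J_Suc by blast
    ultimately obtain m where "ideal_prod (J m) (J m) = J m"
      using dcc[of J] by (auto simp: J_Suc)
    then have "J m = {0} \<or> J m = UNIV"
      using no_idem J[of m] two_sided_ideal_iff_right_ideal[OF comm]
      unfolding no_nontrivial_idempotent_ideals_def by blast
    moreover have "J m \<subseteq> I"
      by (induct m) (use ideal_prod_subset J in \<open>auto simp: J_def\<close>)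
    ultimately show False using J[of m] nontriv by auto
  qed
qed

end

section \<open>Reduction modulo \<open>(u - \<theta>)S\<close>\<close>

locale skew = ring_aut \<alpha> for \<alpha> :: "'a::ring_1 \<Rightarrow> 'a" +
  fixes u :: 'a
  assumes central_unit: "central_unit u"
begin

abbreviation "K \<equiv> genS \<alpha> u"

lemma u_commute: "u * x = x * u"
  using central_unit unfolding central_unit_def by blast

definition beta :: "'a \<Rightarrow> 'a" where
  "beta x = u * inv \<alpha> x"

lemma beta_add: "beta (x + y) = beta x + beta y"
  unfolding beta_def by (metis aut_add aut_inv_aut inv_aut_aut distrib_left)

lemma beta_pow_add: "(beta ^^ n) (x + y) = (beta ^^ n) x + (beta ^^ n) y"
  by (induct n) (auto simp: beta_add)

lemma beta_pow_zero: "(beta ^^ n) 0 = 0"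
  using beta_pow_add[of n 0 0] by simp

lemma beta_pow_uminus: "(beta ^^ n) (- x) = - (beta ^^ n) x"
  using minus_unique[of "(beta ^^ n) x" "(beta ^^ n) (- x)"] beta_pow_add[of n x "- x"]
    beta_pow_zero[of n]
  by simp

lemma beta_mult_aut: "beta (r * \<alpha> t) = beta r * t"
  unfolding beta_def by (simp add: inv_aut_mult inv_aut_aut mult.assoc)

lemma beta_pow_mult_aut_pow: "(beta ^^ i) (r * (\<alpha> ^^ i) t) = (beta ^^ i) r * t"
proof (induct i arbitrary: t)
  case (Suc i)
  have "(\<alpha> ^^ Suc i) t = (\<alpha> ^^ i) (\<alpha> t)" by (simp only: funpow_Suc_right comp_apply)
  then show ?case using Suc[of "\<alpha> t"] by (simp add: beta_mult_aut)
qed simp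

lemma beta_pow_mem:
  assumes N: "right_ideal N" "\<alpha> ` N = N" and x: "x \<in> N"
  shows "(beta ^^ n) x \<in> N"
proof -
  have "beta y \<in> N" if "y \<in> N" for y
  proof -
    from that N(2) have "y \<in> \<alpha> ` N" by simp
    then obtain z where z: "z \<in> N" "y = \<alpha> z" by blast
    then have "beta y = z * u" unfolding beta_def by (simp add: inv_aut_aut u_commute[of z])
    then show ?thesis using right_ideal_mult[OF N(1) z(1)] by simp
  qed
  then show ?thesis by (induct n) (simp_all add: x)
qed

lemma skpoly_mult: "p \<in> skpoly \<Longrightarrow> q \<in> skpoly \<Longrightarrow> sk_mult \<alpha> p q \<in> skpoly"
proof -
  assume "p \<in> skpoly" "q \<in> skpoly"
  then obtain M1 M2 where p: "\<forall>k>M1. p k = 0" and q: "\<forall>k>M2. q k = 0"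
    unfolding skpoly_iff_eventually_zero by blast
  have "p i * (\<alpha> ^^ i) (q (k - i)) = 0" if "k > M1 + M2" for i k
    using p q that by (cases "i > M1") (simp_all add: aut_pow_zero)
  then have "\<forall>k>M1+M2. sk_mult \<alpha> p q k = 0"
    unfolding sk_mult_def by simp
  then show ?thesis unfolding skpoly_iff_eventually_zero by blast
qed

lemma sk_mult_add_right:
  "sk_mult \<alpha> p (sk_add s t) = sk_add (sk_mult \<alpha> p s) (sk_mult \<alpha> p t)"
  unfolding sk_mult_def sk_add_def by (rule ext) (simp add: aut_pow_add distrib_left sum.distrib)

lemma sk_mult_zero_right: "sk_mult \<alpha> p (\<lambda>k. 0) = (\<lambda>k. 0)"
  unfolding sk_mult_def by (simp add: aut_pow_zero)

definition sk_residue :: "(nat \<Rightarrow> 'a) \<Rightarrow> 'a" where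
  "sk_residue p = (\<Sum>k | p k \<noteq> 0. (beta ^^ k) (p k))"

text \<open>The right action of \<open>s\<close> on \<open>R \<cong> S/(u - \<theta>)S\<close>, i.e. \<open>r \<mapsto> \<epsilon>(r s)\<close>.\<close>
definition residue_act :: "'a \<Rightarrow> (nat \<Rightarrow> 'a) \<Rightarrow> 'a" where
  "residue_act r s = (\<Sum>j | s j \<noteq> 0. (beta ^^ j) (r * s j))"

lemma sk_residue_eq_sum:
  "finite A \<Longrightarrow> {k. p k \<noteq> 0} \<subseteq> A \<Longrightarrow> sk_residue p = (\<Sum>k\<in>A. (beta ^^ k) (p k))"
  unfolding sk_residue_def by (rule sum.mono_neutral_left) (auto simp: beta_pow_zero)

lemma residue_act_eq_sum:
  "finite A \<Longrightarrow> {k. s k \<noteq> 0} \<subseteq> A \<Longrightarrow> residue_act r s = (\<Sum>j\<in>A. (beta ^^ j) (r * s j))"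
  unfolding residue_act_def by (rule sum.mono_neutral_left) (auto simp: beta_pow_zero)

lemma residue_act_add: "residue_act (x + y) s = residue_act x s + residue_act y s"
  unfolding residue_act_def by (simp add: distrib_right beta_pow_add sum.distrib)

lemma residue_act_zero: "residue_act 0 s = 0"
  unfolding residue_act_def by (simp add: beta_pow_zero)

lemma residue_act_mem:
  assumes N: "right_ideal N" "\<alpha> ` N = N" and r: "r \<in> N"
  shows "residue_act r s \<in> N"
  unfolding residue_act_def
  by (rule right_ideal_sum[OF N(1)]) (auto intro!: beta_pow_mem[OF N] right_ideal_mult[OF N(1) r])

lemma sk_residue_zero: "sk_residue (\<lambda>k. 0) = 0"
  unfolding sk_residue_def by simp

lemma sk_residue_monom: "sk_residue (sk_monom c n) = (beta ^^ n) c"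
  by (subst sk_residue_eq_sum[of "{n}"]) (auto simp: sk_monom_def)

lemma sk_residue_C: "sk_residue (sk_C r) = r"
  by (simp add: sk_C_eq_monom sk_residue_monom)

lemma sk_residue_add:
  assumes "p \<in> skpoly" "q \<in> skpoly"
  shows "sk_residue (sk_add p q) = sk_residue p + sk_residue q"
proof -
  let ?A = "{k. p k \<noteq> 0} \<union> {k. q k \<noteq> 0}"
  have A: "finite ?A" using assms by (simp add: finite_support_skpoly)
  have "sk_residue (sk_add p q) = (\<Sum>k\<in>?A. (beta ^^ k) (p k + q k))"
    unfolding sk_add_def by (rule sk_residue_eq_sum[OF A]) auto
  also have "\<dots> = sk_residue p + sk_residue q"
    using sk_residue_eq_sum[OF A, of p] sk_residue_eq_sum[OF A, of q]
    by (auto simp: beta_pow_add sum.distrib)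
  finally show ?thesis .
qed

lemma sk_residue_uminus: "p \<in> skpoly \<Longrightarrow> sk_residue (\<lambda>k. - p k) = - sk_residue p"
  using sk_residue_eq_sum[OF finite_support_skpoly, of p "\<lambda>k. - p k"]
    sk_residue_eq_sum[OF finite_support_skpoly, of p p]
  by (simp add: beta_pow_uminus sum_negf)

lemma sk_residue_diff:
  "p \<in> skpoly \<Longrightarrow> q \<in> skpoly \<Longrightarrow> sk_residue (\<lambda>k. p k - q k) = sk_residue p - sk_residue q"
  using sk_residue_add[of p "\<lambda>k. - q k"] sk_residue_uminus[of q] skpoly_uminus[of q]
  by (simp add: sk_add_def)

lemma sk_residue_mult_monom:
  assumes s: "s \<in> skpoly"
  shows "sk_residue (sk_mult \<alpha> (sk_monom c n) s) = residue_act ((beta ^^ n) c) s"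
proof -
  define S where "S = {j. s j \<noteq> 0}"
  have fS: "finite S" using s by (simp add: S_def finite_support_skpoly)
  have supp: "{k. sk_mult \<alpha> (sk_monom c n) s k \<noteq> 0} \<subseteq> (+) n ` S"
  proof
    fix k assume "k \<in> {k. sk_mult \<alpha> (sk_monom c n) s k \<noteq> 0}"
    then have "n \<le> k" "s (k - n) \<noteq> 0"
      by (auto simp: sk_mult_monom_left aut_pow_zero split: if_splits)
    then show "k \<in> (+) n ` S" unfolding S_def
      by (metis (mono_tags, lifting) image_eqI le_add_diff_inverse mem_Collect_eq)
  qed
  have "sk_residue (sk_mult \<alpha> (sk_monom c n) s)
      = (\<Sum>k\<in>(+) n ` S. (beta ^^ k) (sk_mult \<alpha> (sk_monom c n) s k))"
    using fS by (intro sk_residue_eq_sum[OF _ supp]) simp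
  also have "\<dots> = (\<Sum>j\<in>S. (beta ^^ (n + j)) (sk_mult \<alpha> (sk_monom c n) s (n + j)))"
    by (subst sum.reindex) auto
  also have "\<dots> = (\<Sum>j\<in>S. (beta ^^ j) ((beta ^^ n) (c * (\<alpha> ^^ n) (s j))))"
    by (rule sum.cong) (auto simp: sk_mult_monom_left add.commute[of n] funpow_add)
  also have "\<dots> = (\<Sum>j\<in>S. (beta ^^ j) ((beta ^^ n) c * s j))"
    by (simp add: beta_pow_mult_aut_pow)
  also have "\<dots> = residue_act ((beta ^^ n) c) s"
    by (rule residue_act_eq_sum[symmetric, OF fS]) (auto simp: S_def)
  finally show ?thesis .
qed

lemma sk_residue_mult:
  assumes p: "p \<in> skpoly" and s: "s \<in> skpoly"
  shows "sk_residue (sk_mult \<alpha> p s) = residue_act (sk_residue p) s"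
  using p
proof (induction rule: skpoly_induct)
  case zero
  then show ?case by (simp add: sk_mult_zero_left sk_residue_zero residue_act_zero)
next
  case (add_monom q c n)
  have "sk_residue (sk_mult \<alpha> (sk_add q (sk_monom c n)) s)
      = sk_residue (sk_mult \<alpha> q s) + sk_residue (sk_mult \<alpha> (sk_monom c n) s)"
    by (simp add: sk_mult_add_left sk_residue_add skpoly_mult add_monom.hyps s skpoly_monom)
  also have "\<dots> = residue_act (sk_residue q) s + residue_act ((beta ^^ n) c) s"
    using add_monom.IH sk_residue_mult_monom[OF s] by simp
  also have "\<dots> = residue_act (sk_residue (sk_add q (sk_monom c n))) s"
    by (simp add: residue_act_add sk_residue_add add_monom.hyps skpoly_monom sk_residue_monom)
  finally show ?case .
qed

lemma sk_residue_gen: "sk_residue (sk_gen u) = 0"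
  using inv_aut_uminus[of 1]
  by (simp add: sk_gen_eq_monom sk_residue_add skpoly_monom sk_residue_monom beta_def inv_aut_one)

lemma sk_mult_gen_monom:
  "sk_mult \<alpha> (sk_gen u) (sk_monom d m) = sk_add (sk_monom (u * d) m) (sk_monom (- \<alpha> d) (Suc m))"
  unfolding sk_gen_eq_monom sk_mult_add_left sk_mult_monom_left
  by (rule ext) (auto simp: sk_monom_def sk_add_def aut_zero)

lemma skpoly_of_mem_genS: "g \<in> K \<Longrightarrow> g \<in> skpoly"
  unfolding genS_def using skpoly_mult skpoly_gen by blast

lemma sk_residue_of_mem_genS: "g \<in> K \<Longrightarrow> sk_residue g = 0"
  unfolding genS_def by (auto simp: sk_residue_mult skpoly_gen sk_residue_gen residue_act_zero)

lemma zero_mem_genS: "(\<lambda>k. 0) \<in> K"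
  unfolding genS_def using sk_mult_zero_right skpoly_zero by (metis image_eqI)

lemma sk_add_mem_genS: "g \<in> K \<Longrightarrow> h \<in> K \<Longrightarrow> sk_add g h \<in> K"
  unfolding genS_def by (auto simp: sk_mult_add_right[symmetric] intro!: imageI skpoly_add)

text \<open>The relation \<open>c \<theta>\<^sup>n\<^sup>+\<^sup>1 \<equiv> \<beta>(c) \<theta>\<^sup>n\<close>: the difference is \<open>(u - \<theta>)(- \<alpha>\<inverse>(c) \<theta>\<^sup>n)\<close>.\<close>
lemma monom_Suc_diff_mem_genS: "(\<lambda>k. sk_monom c (Suc n) k - sk_monom (beta c) n k) \<in> K"
proof -
  have "(\<lambda>k. sk_monom c (Suc n) k - sk_monom (beta c) n k)
      = sk_mult \<alpha> (sk_gen u) (sk_monom (- inv \<alpha> c) n)"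
    unfolding sk_mult_gen_monom
    by (rule ext) (auto simp: sk_monom_def sk_add_def beta_def aut_uminus aut_inv_aut)
  then show ?thesis unfolding genS_def using skpoly_monom by auto
qed

lemma monom_diff_mem_genS: "(\<lambda>k. sk_monom c n k - sk_C ((beta ^^ n) c) k) \<in> K"
proof (induct n arbitrary: c)
  case 0
  then show ?case using zero_mem_genS by (simp add: sk_C_eq_monom)
next
  case (Suc n)
  have "(beta ^^ Suc n) c = (beta ^^ n) (beta c)" by (simp only: funpow_Suc_right comp_apply)
  then have "(\<lambda>k. sk_monom c (Suc n) k - sk_C ((beta ^^ Suc n) c) k)
     = sk_add (\<lambda>k. sk_monom c (Suc n) k - sk_monom (beta c) n k)
              (\<lambda>k. sk_monom (beta c) n k - sk_C ((beta ^^ n) (beta c)) k)"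
    by (simp add: sk_add_def)
  then show ?case using sk_add_mem_genS[OF monom_Suc_diff_mem_genS Suc[of "beta c"]] by simp
qed

lemma diff_sk_C_residue_mem_genS: "p \<in> skpoly \<Longrightarrow> (\<lambda>k. p k - sk_C (sk_residue p) k) \<in> K"
proof (induction rule: skpoly_induct)
  case zero
  then show ?case using zero_mem_genS by (simp add: sk_residue_zero sk_C_def)
next
  case (add_monom q c n)
  have "sk_residue (sk_add q (sk_monom c n)) = sk_residue q + (beta ^^ n) c"
    by (simp add: sk_residue_add add_monom.hyps skpoly_monom sk_residue_monom)
  then have "(\<lambda>k. sk_add q (sk_monom c n) k - sk_C (sk_residue (sk_add q (sk_monom c n))) k)
     = sk_add (\<lambda>k. q k - sk_C (sk_residue q) k) (\<lambda>k. sk_monom c n k - sk_C ((beta ^^ n) c) k)"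
    by (auto simp: sk_add_def sk_C_def algebra_simps)
  then show ?case using sk_add_mem_genS[OF add_monom.IH monom_diff_mem_genS] by simp
qed

lemma mem_genS_iff: "g \<in> K \<longleftrightarrow> g \<in> skpoly \<and> sk_residue g = 0"
proof
  assume "g \<in> skpoly \<and> sk_residue g = 0"
  then show "g \<in> K" using diff_sk_C_residue_mem_genS[of g] by (simp add: sk_C_def)
qed (simp add: skpoly_of_mem_genS sk_residue_of_mem_genS)

lemma sk_coset_subset:
  assumes p: "p \<in> skpoly" and q: "q \<in> skpoly" and eq: "sk_residue p = sk_residue q"
  shows "sk_coset K p \<subseteq> sk_coset K q"
proof
  fix x assume "x \<in> sk_coset K p"
  then obtain g where g: "g \<in> K" "x = sk_add p g" unfolding sk_coset_def by blast
  define h where "h = sk_add (\<lambda>k. p k - q k) g"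
  have "h \<in> K"
    using g p q eq unfolding mem_genS_iff
    by (simp add: h_def skpoly_add skpoly_diff sk_residue_add sk_residue_diff)
  moreover have "x = sk_add q h" using g(2) by (rule_tac ext) (simp add: h_def sk_add_def)
  ultimately show "x \<in> sk_coset K q" unfolding sk_coset_def by blast
qed

lemma sk_coset_eq_iff:
  assumes p: "p \<in> skpoly" and q: "q \<in> skpoly"
  shows "sk_coset K p = sk_coset K q \<longleftrightarrow> sk_residue p = sk_residue q"
proof
  assume eq: "sk_coset K p = sk_coset K q"
  have "p = sk_add p (\<lambda>k. 0)" by (simp add: sk_add_def)
  then have "p \<in> sk_coset K p" unfolding sk_coset_def using zero_mem_genS by blast
  then obtain g where g: "g \<in> K" "p = sk_add q g" using eq unfolding sk_coset_def by blast
  then show "sk_residue p = sk_residue q"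
    using q by (simp add: sk_residue_add skpoly_of_mem_genS sk_residue_of_mem_genS)
next
  assume "sk_residue p = sk_residue q"
  then show "sk_coset K p = sk_coset K q"
    using sk_coset_subset[OF p q] sk_coset_subset[OF q p] by simp
qed

lemma sk_coset_eq_C_residue: "p \<in> skpoly \<Longrightarrow> sk_coset K p = sk_coset K (sk_C (sk_residue p))"
  by (simp add: sk_coset_eq_iff skpoly_C sk_residue_C)

section \<open>The correspondence\<close>

lemma Phi_eq: "Phi \<alpha> u N = {sk_coset K p | p. p \<in> skpoly \<and> sk_residue p \<in> N}"
proof
  show "Phi \<alpha> u N \<subseteq> {sk_coset K p | p. p \<in> skpoly \<and> sk_residue p \<in> N}"
  proof
    fix z assume "z \<in> Phi \<alpha> u N"
    then obtain x n where xn: "x \<in> K" "n \<in> N" "z = sk_coset K (sk_add x (sk_C n))"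
      unfolding Phi_def by blast
    have "sk_add x (sk_C n) \<in> skpoly" "sk_residue (sk_add x (sk_C n)) = n"
      using xn by (simp_all add: skpoly_add skpoly_of_mem_genS skpoly_C sk_residue_add
          sk_residue_of_mem_genS sk_residue_C)
    then show "z \<in> {sk_coset K p | p. p \<in> skpoly \<and> sk_residue p \<in> N}" using xn by auto
  qed
  show "{sk_coset K p | p. p \<in> skpoly \<and> sk_residue p \<in> N} \<subseteq> Phi \<alpha> u N"
  proof
    fix z assume "z \<in> {sk_coset K p | p. p \<in> skpoly \<and> sk_residue p \<in> N}"
    then obtain p where p: "p \<in> skpoly" "sk_residue p \<in> N" "z = sk_coset K p" by blast
    have "p = sk_add (\<lambda>k. p k - sk_C (sk_residue p) k) (sk_C (sk_residue p))"
      by (rule ext) (simp add: sk_add_def)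
    then show "z \<in> Phi \<alpha> u N"
      unfolding Phi_def using p diff_sk_C_residue_mem_genS[OF p(1)] by blast
  qed
qed

lemma sk_coset_mem_Phi_iff:
  assumes q: "q \<in> skpoly"
  shows "sk_coset K q \<in> Phi \<alpha> u N \<longleftrightarrow> sk_residue q \<in> N"
proof
  assume "sk_coset K q \<in> Phi \<alpha> u N"
  then obtain p where "p \<in> skpoly" "sk_residue p \<in> N" "sk_coset K q = sk_coset K p"
    unfolding Phi_eq by blast
  then show "sk_residue q \<in> N" using sk_coset_eq_iff[OF q] by metis
qed (use q in \<open>auto simp: Phi_eq\<close>)

lemma quot_carrier_eq_Phi_UNIV: "quot_carrier K = Phi \<alpha> u UNIV"
  unfolding Phi_eq quot_carrier_def by auto

lemma Phi_subset_Phi_iff: "Phi \<alpha> u N1 \<subseteq> Phi \<alpha> u N2 \<longleftrightarrow> N1 \<subseteq> N2"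
proof
  assume "Phi \<alpha> u N1 \<subseteq> Phi \<alpha> u N2"
  then show "N1 \<subseteq> N2"
    using sk_coset_mem_Phi_iff[OF skpoly_C] by (auto simp: sk_residue_C)
qed (auto simp: Phi_eq)

lemma inj_Phi: "inj (Phi \<alpha> u)"
  by (rule injI) (simp add: Phi_subset_Phi_iff set_eq_subset)

lemma Phi_0: "Phi \<alpha> u {0} = {sk_coset K sk_zero}"
proof -
  have zero: "sk_zero \<in> skpoly" "sk_residue sk_zero = 0"
    by (simp_all add: sk_zero_def skpoly_zero sk_residue_zero)
  show ?thesis unfolding Phi_eq using zero sk_coset_eq_iff[OF _ zero(1)] by auto
qed

lemma quot_submodule_Phi:
  assumes N: "right_ideal N" "\<alpha> ` N = N"
  shows "quot_submodule \<alpha> K (Phi \<alpha> u N)"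
  unfolding quot_submodule_def
proof (intro conjI ballI impI)
  show "Phi \<alpha> u N \<subseteq> quot_carrier K"
    unfolding quot_carrier_eq_Phi_UNIV Phi_subset_Phi_iff by simp
  show "sk_coset K sk_zero \<in> Phi \<alpha> u N"
    using Phi_subset_Phi_iff[of "{0}" N] right_ideal_zero[OF N(1)] by (simp add: Phi_0)
next
  fix p q assume "p \<in> skpoly" "q \<in> skpoly" "sk_coset K p \<in> Phi \<alpha> u N" "sk_coset K q \<in> Phi \<alpha> u N"
  then show "sk_coset K (sk_add p q) \<in> Phi \<alpha> u N"
    by (simp add: sk_coset_mem_Phi_iff skpoly_add sk_residue_add right_ideal_add[OF N(1)])
next
  fix p assume "p \<in> skpoly" "sk_coset K p \<in> Phi \<alpha> u N"
  then show "sk_coset K (\<lambda>k. - p k) \<in> Phi \<alpha> u N"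
    by (simp add: sk_coset_mem_Phi_iff skpoly_uminus sk_residue_uminus right_ideal_uminus[OF N(1)])
next
  fix p s :: "nat \<Rightarrow> 'a" assume "p \<in> skpoly" "s \<in> skpoly" "sk_coset K p \<in> Phi \<alpha> u N"
  then show "sk_coset K (sk_mult \<alpha> p s) \<in> Phi \<alpha> u N"
    by (simp add: sk_coset_mem_Phi_iff skpoly_mult sk_residue_mult residue_act_mem[OF N])
qed

definition residue_ideal :: "(nat \<Rightarrow> 'a) set set \<Rightarrow> 'a set" where
  "residue_ideal M = {r. sk_coset K (sk_C r) \<in> M}"

lemma right_ideal_residue_ideal:
  assumes "quot_submodule \<alpha> K M"
  shows "right_ideal (residue_ideal M)"
proof -
  have "sk_coset K sk_zero \<in> M"
    and add: "\<And>p q. p \<in> skpoly \<Longrightarrow> q \<in> skpoly \<Longrightarrow> sk_coset K p \<in> M \<Longrightarrow> sk_coset K q \<in> M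
            \<Longrightarrow> sk_coset K (sk_add p q) \<in> M"
    and uminus: "\<And>p. p \<in> skpoly \<Longrightarrow> sk_coset K p \<in> M \<Longrightarrow> sk_coset K (\<lambda>k. - p k) \<in> M"
    and mult: "\<And>p s. p \<in> skpoly \<Longrightarrow> s \<in> skpoly \<Longrightarrow> sk_coset K p \<in> M
            \<Longrightarrow> sk_coset K (sk_mult \<alpha> p s) \<in> M"
    using assms unfolding quot_submodule_def by blast+
  then show ?thesis
    unfolding right_ideal_def residue_ideal_def
    using add[OF skpoly_C skpoly_C] uminus[OF skpoly_C] mult[OF skpoly_C skpoly_C]
    by (simp add: sk_C_0 sk_add_C uminus_sk_C sk_mult_C)
qed

lemma Phi_residue_ideal:
  assumes M: "quot_submodule \<alpha> K M"
  shows "Phi \<alpha> u (residue_ideal M) = M"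
proof
  show "Phi \<alpha> u (residue_ideal M) \<subseteq> M"
    using sk_coset_eq_C_residue by (auto simp: Phi_eq residue_ideal_def)
  show "M \<subseteq> Phi \<alpha> u (residue_ideal M)"
  proof
    fix z assume z: "z \<in> M"
    then obtain q where q: "q \<in> skpoly" "z = sk_coset K q"
      using M unfolding quot_submodule_def quot_carrier_def by blast
    then have "sk_residue q \<in> residue_ideal M"
      using z sk_coset_eq_C_residue[OF q(1)] by (simp add: residue_ideal_def)
    then show "z \<in> Phi \<alpha> u (residue_ideal M)"
      using q by (simp add: sk_coset_mem_Phi_iff)
  qed
qed

text \<open>Right multiplication by \<open>\<theta>\<close> acts on residues as \<open>\<beta>\<close>, and \<open>\<alpha>\<inverse>(x) = \<beta>(x) u\<inverse>\<close>.\<close>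
lemma inv_aut_mem_residue_ideal:
  assumes M: "quot_submodule \<alpha> K M" and x: "x \<in> residue_ideal M"
  shows "inv \<alpha> x \<in> residue_ideal M"
proof -
  have "sk_coset K (sk_mult \<alpha> (sk_C x) sk_theta) \<in> M"
    using M x skpoly_C skpoly_theta unfolding quot_submodule_def residue_ideal_def by blast
  moreover have "sk_residue (sk_mult \<alpha> (sk_C x) sk_theta) = beta x"
  proof -
    have "sk_residue (sk_mult \<alpha> (sk_C x) sk_theta) = residue_act x sk_theta"
      by (simp add: sk_residue_mult skpoly_C skpoly_theta sk_residue_C)
    also have "\<dots> = (\<Sum>j\<in>{1}. (beta ^^ j) (x * sk_theta j))"
      by (rule residue_act_eq_sum) (auto simp: sk_theta_def)
    finally show ?thesis by (simp add: sk_theta_def)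
  qed
  ultimately have "beta x \<in> residue_ideal M"
    using sk_coset_eq_C_residue[OF skpoly_mult[OF skpoly_C skpoly_theta]]
    by (simp add: residue_ideal_def)
  moreover obtain v where v: "u * v = 1"
    using central_unit unfolding central_unit_def by blast
  ultimately have "beta x * v \<in> residue_ideal M"
    using right_ideal_mult[OF right_ideal_residue_ideal[OF M]] by blast
  moreover have "beta x * v = inv \<alpha> x"
    unfolding beta_def using u_commute[of "inv \<alpha> x"] v by (simp add: mult.assoc)
  ultimately show ?thesis by simp
qed

lemma aut_image_residue_ideal:
  assumes noeth: "right_noetherian TYPE('a)" and M: "quot_submodule \<alpha> K M"
  shows "\<alpha> ` residue_ideal M = residue_ideal M"
proof (rule aut_image_eq_if_subset[OF noeth right_ideal_residue_ideal[OF M]])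
  show "residue_ideal M \<subseteq> \<alpha> ` residue_ideal M"
    using inv_aut_mem_residue_ideal[OF M] aut_inv_aut by (metis image_eqI subsetI)
qed

lemma quot_submodule_iff_Phi:
  assumes noeth: "right_noetherian TYPE('a)"
  shows "quot_submodule \<alpha> K M \<longleftrightarrow> (\<exists>N. right_ideal N \<and> \<alpha> ` N = N \<and> M = Phi \<alpha> u N)"
proof
  assume M: "quot_submodule \<alpha> K M"
  show "\<exists>N. right_ideal N \<and> \<alpha> ` N = N \<and> M = Phi \<alpha> u N"
    using right_ideal_residue_ideal[OF M] aut_image_residue_ideal[OF noeth M]
      Phi_residue_ideal[OF M, symmetric]
    by (intro exI[of _ "residue_ideal M"] conjI)
qed (use quot_submodule_Phi in metis)

lemma bij_betw_Phi:
  assumes noeth: "right_noetherian TYPE('a)"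
  shows "bij_betw (Phi \<alpha> u) {N. right_ideal N \<and> \<alpha> ` N = N} {M. quot_submodule \<alpha> K M}"
  unfolding bij_betw_def
proof
  show "inj_on (Phi \<alpha> u) {N. right_ideal N \<and> \<alpha> ` N = N}"
    using inj_Phi by (rule inj_on_subset) simp
  show "Phi \<alpha> u ` {N. right_ideal N \<and> \<alpha> ` N = N} = {M. quot_submodule \<alpha> K M}"
    unfolding quot_submodule_iff_Phi[OF noeth] by (auto simp: image_iff conj_assoc)
qed

lemma quot_submodule_trivial_if_alpha_simple:
  assumes noeth: "right_noetherian TYPE('a)" and comm: "\<forall>x y::'a. x * y = y * x"
    and simple: "alpha_simple \<alpha>" and M: "quot_submodule \<alpha> K M"
  shows "M = Phi \<alpha> u {0} \<or> M = Phi \<alpha> u UNIV"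
proof -
  obtain N where N: "right_ideal N" "\<alpha> ` N = N" "M = Phi \<alpha> u N"
    using M unfolding quot_submodule_iff_Phi[OF noeth] by blast
  then have "two_sided_ideal N" using two_sided_ideal_iff_right_ideal[OF comm] by simp
  then have "N = {0} \<or> N = UNIV"
    using simple[unfolded alpha_simple_def, rule_format, of N] N(2) by simp
  then show ?thesis using N(3) by auto
qed

lemma Phi_UNIV_not_subset_Phi_0: "\<not> Phi \<alpha> u UNIV \<subseteq> Phi \<alpha> u {0}"
  unfolding Phi_subset_Phi_iff using one_neq_zero by blast

lemma Phi_UNIV_neq_Phi_0: "Phi \<alpha> u UNIV \<noteq> Phi \<alpha> u {0}"
  using Phi_UNIV_not_subset_Phi_0 by blast

lemma quot_simple_iff_alpha_simple:
  assumes noeth: "right_noetherian TYPE('a)" and comm: "\<forall>x y::'a. x * y = y * x"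
  shows "quot_simple \<alpha> K \<longleftrightarrow> alpha_simple \<alpha>"
proof
  assume simple: "quot_simple \<alpha> K"
  show "alpha_simple \<alpha>"
    unfolding alpha_simple_def
  proof (intro allI impI)
    fix N assume "two_sided_ideal N \<and> \<alpha> ` N = N"
    then have N: "right_ideal N" "\<alpha> ` N = N"
      using two_sided_ideal_iff_right_ideal[OF comm] by auto
    have "Phi \<alpha> u N = Phi \<alpha> u {0} \<or> Phi \<alpha> u N = Phi \<alpha> u UNIV"
      using simple quot_submodule_Phi[OF N]
      unfolding quot_simple_def Phi_0[symmetric] quot_carrier_eq_Phi_UNIV by blast
    then show "N = {0} \<or> N = UNIV"
      using injD[OF inj_Phi] by metis
  qed
next
  assume "alpha_simple \<alpha>"
  then show "quot_simple \<alpha> K"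
    unfolding quot_simple_def Phi_0[symmetric] quot_carrier_eq_Phi_UNIV
    using Phi_UNIV_neq_Phi_0 quot_submodule_trivial_if_alpha_simple[OF noeth comm] by blast
qed

lemma quot_artinian_if_alpha_simple:
  assumes noeth: "right_noetherian TYPE('a)" and comm: "\<forall>x y::'a. x * y = y * x"
    and simple: "alpha_simple \<alpha>"
  shows "quot_artinian \<alpha> K"
  unfolding quot_artinian_def
proof (intro allI impI)
  fix f :: "nat \<Rightarrow> (nat \<Rightarrow> 'a) set set"
  assume f: "(\<forall>n. quot_submodule \<alpha> K (f n)) \<and> (\<forall>n. f (Suc n) \<subseteq> f n)"
  then have trivial: "f n = Phi \<alpha> u {0} \<or> f n = Phi \<alpha> u UNIV" for n
    using quot_submodule_trivial_if_alpha_simple[OF noeth comm simple] by blast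
  have descending: "m \<le> n \<Longrightarrow> f n \<subseteq> f m" for m n
    by (induct n rule: dec_induct) (use f in blast)+
  show "\<exists>m. \<forall>n\<ge>m. f n = f m"
  proof (cases "\<exists>m. f m = Phi \<alpha> u {0}")
    case True
    then obtain m where m: "f m = Phi \<alpha> u {0}" by blast
    have "f n = f m" if "m \<le> n" for n
      using trivial[of n] descending[OF that] Phi_UNIV_not_subset_Phi_0 m by auto
    then show ?thesis by blast
  next
    case False
    then have "f n = Phi \<alpha> u UNIV" for n using trivial by blast
    then show ?thesis by simp
  qed
qed

lemma stable_ideals_dcc_if_quot_artinian:
  assumes art: "quot_artinian \<alpha> K"
    and f: "\<And>n. right_ideal (f n) \<and> \<alpha> ` f n = f n" "\<And>n. f (Suc n) \<subseteq> f n"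
  shows "\<exists>m. f (Suc m) = f m"
proof -
  have "\<exists>m. \<forall>n\<ge>m. Phi \<alpha> u (f n) = Phi \<alpha> u (f m)"
    using art f quot_submodule_Phi Phi_subset_Phi_iff
    unfolding quot_artinian_def by (simp add: image_def)
  then obtain m where "Phi \<alpha> u (f (Suc m)) = Phi \<alpha> u (f m)"
    using le_Suc_eq by blast
  then show ?thesis using inj_Phi unfolding inj_def by blast
qed

lemma quot_artinian_iff_alpha_simple:
  assumes noeth: "right_noetherian TYPE('a)" and comm: "\<forall>x y::'a. x * y = y * x"
    and domain: "\<forall>x y::'a. x * y = 0 \<longrightarrow> x = 0 \<or> y = 0"
    and no_idem: "no_nontrivial_idempotent_ideals TYPE('a)"
  shows "quot_artinian \<alpha> K \<longleftrightarrow> alpha_simple \<alpha>"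
proof
  assume "quot_artinian \<alpha> K"
  then show "alpha_simple \<alpha>"
    by (intro alpha_simple_if_stable_ideals_dcc[OF comm domain no_idem]
        stable_ideals_dcc_if_quot_artinian)
qed (rule quot_artinian_if_alpha_simple[OF noeth comm])

end

theorem lemma2p4:
  fixes \<alpha> :: "'a::ring_1 \<Rightarrow> 'a" and u :: 'a
  assumes "right_noetherian TYPE('a)"
    and "ring_automorphism \<alpha>"
    and "central_unit u"
  shows "bij_betw (Phi \<alpha> u) {N. right_ideal N \<and> \<alpha> ` N = N}
                           {M. quot_submodule \<alpha> (genS \<alpha> u) M}
       \<and> (\<forall>N1\<in>{N. right_ideal N \<and> \<alpha> ` N = N}. \<forall>N2\<in>{N. right_ideal N \<and> \<alpha> ` N = N}.
              N1 \<subseteq> N2 \<longleftrightarrow> Phi \<alpha> u N1 \<subseteq> Phi \<alpha> u N2)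
       \<and> ((\<forall>x y::'a. x * y = y * x) \<longrightarrow>
              (quot_simple \<alpha> (genS \<alpha> u) \<longleftrightarrow> alpha_simple \<alpha>))
       \<and> ((\<forall>x y::'a. x * y = y * x) \<and> (\<forall>x y::'a. x * y = 0 \<longrightarrow> x = 0 \<or> y = 0)
            \<and> no_nontrivial_idempotent_ideals TYPE('a) \<longrightarrow>
              (quot_artinian \<alpha> (genS \<alpha> u) \<longleftrightarrow> alpha_simple \<alpha>))"
proof -
  interpret skew \<alpha> u
    using assms(2,3) by unfold_locales
  show ?thesis
  proof (intro conjI ballI impI)
    show "bij_betw (Phi \<alpha> u) {N. right_ideal N \<and> \<alpha> ` N = N} {M. quot_submodule \<alpha> K M}"
      by (rule bij_betw_Phi[OF assms(1)])
    show "N1 \<subseteq> N2 \<longleftrightarrow> Phi \<alpha> u N1 \<subseteq> Phi \<alpha> u N2" for N1 N2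
      by (simp add: Phi_subset_Phi_iff)
    show "quot_simple \<alpha> K \<longleftrightarrow> alpha_simple \<alpha>" if "\<forall>x y::'a. x * y = y * x"
      using quot_simple_iff_alpha_simple[OF assms(1) that] .
    show "quot_artinian \<alpha> K \<longleftrightarrow> alpha_simple \<alpha>"
      if "(\<forall>x y::'a. x * y = y * x) \<and> (\<forall>x y::'a. x * y = 0 \<longrightarrow> x = 0 \<or> y = 0)
            \<and> no_nontrivial_idempotent_ideals TYPE('a)"
      using that quot_artinian_iff_alpha_simple[OF assms(1)] by blast
  qed
qed

end
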